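(* Every uniform Kan complex $A$ has a connection $c:A^{\mathrm{I}}\to A^{\mathrm{I}\times\mathrm{I}}$.
   Context: Let $\mathbb{B}$ be the category of finite sets $[n]=\{\bot,x_1,\dots,x_n,\top\}$ ($n\ge0$, $\bot\ne\top$) and functions preserving $\bot,\top$; cartesian cubical sets are presheaves on $\mathbb{B}^{op}$. $\mathrm{I}^n$ is the representable on $[n]$, $\mathrm{I}^n\cong\mathrm{I}\times\dots\times\mathrm{I}$, $\mathrm{I}=\mathrm{I}^1$, $\mathrm{I}^0=1$; maps $\mathrm{I}^n\to X$ correspond to $n$-cubes of $X$. The two maps $[1]\to[0]$ give endpoints $0,1:1\to\mathrm{I}$. For $1\le i\le n$, $d\in\{0,1\}$, the face $\alpha_i^d:\mathrm{I}^{n-1}\to\mathrm{I}^n$ inserts $d$ in coordinate $i$; for $e\in\{0,1\}$ the open box $\sqcup^n_e\rightarrowtail\mathrm{I}^n$ is the union of the images of all faces $\alpha_i^d$ with $(i,d)\ne(1,e)$, with inclusion $i^n_e$. A uniform Kan complex is a cubical set $A$ with, for each $n\ge1$, $e\in\{0,1\}$, $k\ge1$ and each $b:\mathrm{I}^k\times\sqcup^n_e\to A$, a chosen extension $\phi(b):\mathrm{I}^k\times\mathrm{I}^n\to A$ of $b$ along $1\times i^n_e$, such that $\phi(b(\alpha\times1))=\phi(b)(\alpha\times1)$ for all $\alpha:\mathrm{I}^j\to\mathrm{I}^k$ ($j\ge 1$). A connection on a cubical set $X$ is a map of cubical sets $c:X^{\mathrm{I}}\to X^{\mathrm{I}\times\mathrm{I}}$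 such that for every $n$ and every $n$-cube $a$ of $X^{\mathrm{I}}$, viewed as $a:\mathrm{I}^n\times\mathrm{I}\to X$, with $a_0=a\circ(1\times0):\mathrm{I}^n\to X$, the $n$-cube $c(a)$, viewed as $c(a):\mathrm{I}^n\times\mathrm{I}\times\mathrm{I}\to X$ (coordinates $(u,s,t)$), satisfies: its restriction to $s=1$ is $a$ (as a map $\mathrm{I}^n\times\mathrm{I}\to X$ in $(u,t)$), and its restrictions to $s=0$ and to $t=0$ are both the constant path $a_0\circ\mathrm{pr}_{\mathrm{I}^n}$ at $a_0$. (The restriction to $t=1$ is unconstrained.) *)

theory Defs
  imports Main
begin

text \<open>Elements of [n] = {bot, x_1, ..., x_n, top}: Bot, Top and V i for 1 \<le> i \<le> n.\<close>
datatype pt = Bot | Top | V nat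

definition pts :: "nat \<Rightarrow> pt set" where
  "pts m = {Bot, Top} \<union> V ` {1..m}"

text \<open>A morphism [n] \<rightarrow> [m] of \<B> (preserving bot and top) is encoded by its values on
  x_1..x_n; outside {1..n} the encoding is fixed to Bot (extensionality).\<close>
definition Bmaps :: "nat \<Rightarrow> nat \<Rightarrow> (nat \<Rightarrow> pt) set" where
  "Bmaps n m = {f. (\<forall>i\<in>{1..n}. f i \<in> pts m) \<and> (\<forall>i. i \<notin> {1..n} \<longrightarrow> f i = Bot)}"

fun ext :: "(nat \<Rightarrow> pt) \<Rightarrow> pt \<Rightarrow> pt" where
  "ext g Bot = Bot"
| "ext g Top = Top"
| "ext g (V j) = g j"

definition bcomp :: "(nat \<Rightarrow> pt) \<Rightarrow> (nat \<Rightarrow> pt) \<Rightarrow> (nat \<Rightarrow> pt)" where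
  "bcomp g f = ext g \<circ> f"

definition idB :: "nat \<Rightarrow> (nat \<Rightarrow> pt)" where
  "idB n = (\<lambda>i. if 1 \<le> i \<and> i \<le> n then V i else Bot)"

text \<open>f \<oplus> id_k : [n+k] \<rightarrow> [m+k] for f : [n] \<rightarrow> [m].\<close>
definition bsum :: "nat \<Rightarrow> nat \<Rightarrow> (nat \<Rightarrow> pt) \<Rightarrow> nat \<Rightarrow> (nat \<Rightarrow> pt)" where
  "bsum n m f k = (\<lambda>i. if 1 \<le> i \<and> i \<le> n then f i
                       else if n < i \<and> i \<le> n + k then V (i - n + m) else Bot)"

text \<open>The \<B>-map [N] \<rightarrow> [N-1] corresponding to the face I^(N-1) \<rightarrow> I^N inserting the
  endpoint d (Bot = 0, Top = 1) in coordinate i.\<close>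
definition faceB :: "nat \<Rightarrow> nat \<Rightarrow> pt \<Rightarrow> (nat \<Rightarrow> pt)" where
  "faceB N i d = (\<lambda>j. if 1 \<le> j \<and> j < i then V j
                      else if j = i then d
                      else if i < j \<and> j \<le> N then V (j - 1) else Bot)"

definition endp :: "bool \<Rightarrow> pt" where
  "endp d = (if d then Top else Bot)"

section \<open>Cartesian cubical sets (covariant functors on \<B> = presheaves on \<B>^op)\<close>

record 'a cset =
  cells :: "nat \<Rightarrow> 'a set"
  act :: "nat \<Rightarrow> nat \<Rightarrow> (nat \<Rightarrow> pt) \<Rightarrow> 'a \<Rightarrow> 'a"

definition cubical_set :: "'a cset \<Rightarrow> bool" where
  "cubical_set X \<longleftrightarrow>
     (\<forall>n x. x \<in> cells X n \<longrightarrow> act X n n (idB n) x = x) \<and>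
     (\<forall>n m f x. f \<in> Bmaps n m \<longrightarrow> x \<in> cells X n \<longrightarrow> act X n m f x \<in> cells X m) \<and>
     (\<forall>n m p f g x. f \<in> Bmaps n m \<longrightarrow> g \<in> Bmaps m p \<longrightarrow> x \<in> cells X n \<longrightarrow>
        act X n p (bcomp g f) x = act X m p g (act X n m f x))"

text \<open>A subobject S of the representable I^N is given levelwise by S m \<subseteq> Bmaps N m.
  A map S \<rightarrow> A is a natural family (extensional: undefined outside S).\<close>
definition pmap :: "'a cset \<Rightarrow> nat \<Rightarrow> (nat \<Rightarrow> (nat \<Rightarrow> pt) set)
                     \<Rightarrow> (nat \<Rightarrow> (nat \<Rightarrow> pt) \<Rightarrow> 'a) \<Rightarrow> bool" where
  "pmap A N S b \<longleftrightarrow>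
     (\<forall>m f. f \<in> S m \<longrightarrow> b m f \<in> cells A m) \<and>
     (\<forall>m m' f g. f \<in> S m \<longrightarrow> g \<in> Bmaps m m' \<longrightarrow> b m' (bcomp g f) = act A m m' g (b m f)) \<and>
     (\<forall>m f. f \<notin> S m \<longrightarrow> b m f = undefined)"

definition fullS :: "nat \<Rightarrow> nat \<Rightarrow> (nat \<Rightarrow> pt) set" where
  "fullS N m = Bmaps N m"

text \<open>I^k \<times> (open box \<sqcup>^n_e) \<subseteq> I^k \<times> I^n = I^(k+n): union of the images of
  1 \<times> \<alpha>_i^d for (i,d) \<noteq> (1,e), i.e. of those f with f(x_(k+i)) = d.\<close>
definition boxS :: "nat \<Rightarrow> nat \<Rightarrow> bool \<Rightarrow> nat \<Rightarrow> (nat \<Rightarrow> pt) set" where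
  "boxS k n e m = {f \<in> Bmaps (k + n) m.
      \<exists>i\<in>{1..n}. \<exists>d. (i, d) \<noteq> (1, e) \<and> f (k + i) = endp d}"

text \<open>Precomposition of b (a map out of a subobject of I^(k+n)) with the map
  I^(j+n) \<rightarrow> I^(k+n) induced by the \<B>-map h : [k+n] \<rightarrow> [j+n], restricted to S.\<close>
definition prec :: "(nat \<Rightarrow> (nat \<Rightarrow> pt) set) \<Rightarrow> (nat \<Rightarrow> pt)
                     \<Rightarrow> (nat \<Rightarrow> (nat \<Rightarrow> pt) \<Rightarrow> 'a) \<Rightarrow> (nat \<Rightarrow> (nat \<Rightarrow> pt) \<Rightarrow> 'a)" where
  "prec S h b = (\<lambda>m f. if f \<in> S m then b m (bcomp f h) else undefined)"

text \<open>phi n e k b : the chosen filler of b : I^k \<times> \<sqcup>^n_e \<rightarrow> A.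
  A map \<alpha> : I^j \<rightarrow> I^k is a \<B>-map a : [k] \<rightarrow> [j], and \<alpha> \<times> 1 corresponds to a \<oplus> id_n.\<close>
definition uniform_kan :: "'a cset \<Rightarrow> (nat \<Rightarrow> bool \<Rightarrow> nat \<Rightarrow> (nat \<Rightarrow> (nat \<Rightarrow> pt) \<Rightarrow> 'a)
                              \<Rightarrow> (nat \<Rightarrow> (nat \<Rightarrow> pt) \<Rightarrow> 'a)) \<Rightarrow> bool" where
  "uniform_kan A phi \<longleftrightarrow>
     (\<forall>n e k b. 1 \<le> n \<longrightarrow> 1 \<le> k \<longrightarrow> pmap A (k + n) (boxS k n e) b \<longrightarrow>
        pmap A (k + n) (fullS (k + n)) (phi n e k b) \<and>
        (\<forall>m f. f \<in> boxS k n e m \<longrightarrow> phi n e k b m f = b m f) \<and>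
        (\<forall>j a. 1 \<le> j \<longrightarrow> a \<in> Bmaps k j \<longrightarrow>
           phi n e j (prec (boxS j n e) (bsum k j a n) b)
             = prec (fullS (j + n)) (bsum k j a n) (phi n e k b)))"

text \<open>n-cubes of X^I are (n+1)-cubes of X (last coordinate = path coordinate t),
  n-cubes of X^(I\<times>I) are (n+2)-cubes of X (coordinates (u,s,t), s = n+1, t = n+2);
  the action of f is that of f \<oplus> id.  c n maps n-cubes of X^I to n-cubes of X^(I\<times>I).\<close>
definition is_connection :: "'a cset \<Rightarrow> (nat \<Rightarrow> 'a \<Rightarrow> 'a) \<Rightarrow> bool" where
  "is_connection X c \<longleftrightarrow>
     (\<forall>n a. a \<in> cells X (n + 1) \<longrightarrow> c n a \<in> cells X (n + 2)) \<and>
     (\<forall>n m f a. f \<in> Bmaps n m \<longrightarrow> a \<in> cells X (n + 1) \<longrightarrow>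
        c m (act X (n + 1) (m + 1) (bsum n m f 1) a)
          = act X (n + 2) (m + 2) (bsum n m f 2) (c n a)) \<and>
     (\<forall>n a. a \<in> cells X (n + 1) \<longrightarrow>
        (let a0 = act X (n + 1) n (faceB (n + 1) (n + 1) Bot) a;
             const = act X n (n + 1) (idB n) a0
         in act X (n + 2) (n + 1) (faceB (n + 2) (n + 1) Top) (c n a) = a \<and>
            act X (n + 2) (n + 1) (faceB (n + 2) (n + 1) Bot) (c n a) = const \<and>
            act X (n + 2) (n + 1) (faceB (n + 2) (n + 2) Bot) (c n a) = const))"

end

theory Submission
  imports Defs
begin

text \<open>Given a path \<open>a(u, t)\<close>, consider the open box \<open>\<sqcup>\<^sup>2\<^sub>1\<close> in the coordinates \<open>(x, y)\<close>
  carrying \<open>a(u, x)\<close> on the face \<open>y = 1\<close> and the constant \<open>a(u, 0)\<close> on the faces \<open>x = 0\<close>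
  and \<open>y = 0\<close>; these agree on the edges.  Its chosen filler \<open>\<Phi>(u, x, y)\<close> gives the connection
  \<open>c(a)(u, s, t) = \<Phi>(u, t, s)\<close>, whose faces \<open>s = 1\<close>, \<open>s = 0\<close>, \<open>t = 0\<close> are the three faces of
  the box.  Naturality of \<open>c\<close> in \<open>u\<close> is exactly the uniformity of the filler, applied with
  \<open>u\<close> as the parameter cube \<open>I\<^sup>k\<close> (enlarged by one dummy coordinate so that \<open>k \<ge> 1\<close>).\<close>

lemma pts_cases:
  assumes "x \<in> pts m"
  obtains "x = Bot" | "x = Top" | j where "1 \<le> j" "j \<le> m" "x = V j"
  using assms unfolding pts_def by auto

lemma pts_mono: "x \<in> pts m \<Longrightarrow> m \<le> m' \<Longrightarrow> x \<in> pts m'"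
  unfolding pts_def by auto

lemma Bmaps_in_pts: "f \<in> Bmaps n m \<Longrightarrow> 1 \<le> i \<Longrightarrow> i \<le> n \<Longrightarrow> f i \<in> pts m"
  unfolding Bmaps_def by auto

lemma ext_in_pts: "x \<in> pts m \<Longrightarrow> g \<in> Bmaps m p \<Longrightarrow> ext g x \<in> pts p"
  by (erule pts_cases) (auto simp: Bmaps_def pts_def)

lemma ext_eq_self:
  "x \<in> pts m \<Longrightarrow> (\<And>j. 1 \<le> j \<Longrightarrow> j \<le> m \<Longrightarrow> g j = V j) \<Longrightarrow> ext g x = x"
  by (erule pts_cases) auto

lemma bcomp_in_Bmaps: "f \<in> Bmaps n m \<Longrightarrow> g \<in> Bmaps m p \<Longrightarrow> bcomp g f \<in> Bmaps n p"
  using ext_in_pts by (auto simp: Bmaps_def bcomp_def)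

lemma bsum_in_Bmaps: "f \<in> Bmaps n m \<Longrightarrow> bsum n m f k \<in> Bmaps (n + k) (m + k)"
  unfolding bsum_def Bmaps_def by (auto simp: pts_def image_iff intro: pts_mono)

lemma idB_in_Bmaps: "n \<le> m \<Longrightarrow> idB n \<in> Bmaps n m"
  unfolding Bmaps_def idB_def by (auto simp: pts_def)

lemma faceB_in_Bmaps:
  "d \<in> {Bot, Top} \<Longrightarrow> 1 \<le> i \<Longrightarrow> i \<le> N \<Longrightarrow> faceB N i d \<in> Bmaps N (N - 1)"
  unfolding Bmaps_def faceB_def by (auto simp: pts_def image_iff)

lemma boxS_2_True_iff:
  "g \<in> boxS k 2 True M \<longleftrightarrow>
     g \<in> Bmaps (k + 2) M \<and> (g (k + 1) = Bot \<or> g (k + 2) = Bot \<or> g (k + 2) = Top)"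
proof -
  have "{1..2::nat} = {1, 2}" by auto
  then have "(\<exists>i\<in>{1..2::nat}. \<exists>d. (i, d) \<noteq> (1, True) \<and> g (k + i) = endp d) \<longleftrightarrow>
      (g (k + 1) = Bot \<or> g (k + 2) = Bot \<or> g (k + 2) = Top)"
    by (auto simp: endp_def)
  then show ?thesis
    unfolding boxS_def by simp
qed

lemma cubical_set_act_in_cells:
  "cubical_set X \<Longrightarrow> f \<in> Bmaps n m \<Longrightarrow> x \<in> cells X n \<Longrightarrow> act X n m f x \<in> cells X m"
  unfolding cubical_set_def by blast

lemma cubical_set_act_bcomp:
  "cubical_set X \<Longrightarrow> f \<in> Bmaps n m \<Longrightarrow> g \<in> Bmaps m p \<Longrightarrow> x \<in> cells X n \<Longrightarrow>
     act X n p (bcomp g f) x = act X m p g (act X n m f x)"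
  unfolding cubical_set_def by blast

lemma cubical_set_act_idB: "cubical_set X \<Longrightarrow> x \<in> cells X n \<Longrightarrow> act X n n (idB n) x = x"
  unfolding cubical_set_def by blast

lemma pmap_fullS_natural:
  "pmap A N (fullS N) P \<Longrightarrow> f \<in> Bmaps N m \<Longrightarrow> g \<in> Bmaps m m' \<Longrightarrow>
     P m' (bcomp g f) = act A m m' g (P m f)"
  unfolding pmap_def fullS_def by blast

lemma pmap_fullS_in_cells: "pmap A N (fullS N) P \<Longrightarrow> f \<in> Bmaps N m \<Longrightarrow> P m f \<in> cells A m"
  unfolding pmap_def fullS_def by blast

lemma uniform_kan_filler_pmap:
  "uniform_kan A phi \<Longrightarrow> 1 \<le> n \<Longrightarrow> 1 \<le> k \<Longrightarrow> pmap A (k + n) (boxS k n e) b \<Longrightarrow>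
     pmap A (k + n) (fullS (k + n)) (phi n e k b)"
  unfolding uniform_kan_def by blast

lemma uniform_kan_filler_extends:
  "uniform_kan A phi \<Longrightarrow> 1 \<le> n \<Longrightarrow> 1 \<le> k \<Longrightarrow> pmap A (k + n) (boxS k n e) b \<Longrightarrow>
     f \<in> boxS k n e m \<Longrightarrow> phi n e k b m f = b m f"
  unfolding uniform_kan_def by blast

lemma uniform_kan_filler_uniform:
  "uniform_kan A phi \<Longrightarrow> 1 \<le> n \<Longrightarrow> 1 \<le> k \<Longrightarrow> pmap A (k + n) (boxS k n e) b \<Longrightarrow>
     1 \<le> j \<Longrightarrow> a \<in> Bmaps k j \<Longrightarrow>
     phi n e j (prec (boxS j n e) (bsum k j a n) b)
       = prec (fullS (j + n)) (bsum k j a n) (phi n e k b)"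
  unfolding uniform_kan_def by blast

text \<open>The cube \<open>g\<close> of \<open>I\<^sup>n \<times> I \<times> I\<^sup>2\<close>, with coordinates \<open>(u, z, x, y)\<close>, lying in the open
  box is sent to the cube \<open>(u, if y = 1 then x else 0)\<close> of \<open>I\<^sup>n \<times> I\<close>; the dummy coordinate
  \<open>z\<close> is forgotten.\<close>
definition connection_box_map :: "nat \<Rightarrow> (nat \<Rightarrow> pt) \<Rightarrow> (nat \<Rightarrow> pt)" where
  "connection_box_map n g = (\<lambda>i. if 1 \<le> i \<and> i \<le> n then g i
      else if i = n + 1 then (if g (n + 3) = Top then g (n + 2) else Bot) else Bot)"

definition connection_box :: "'a cset \<Rightarrow> nat \<Rightarrow> 'a \<Rightarrow> nat \<Rightarrow> (nat \<Rightarrow> pt) \<Rightarrow> 'a" where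
  "connection_box A n a = (\<lambda>M g. if g \<in> boxS (n + 1) 2 True M
      then act A (n + 1) M (connection_box_map n g) a else undefined)"

text \<open>The map \<open>(u, s, t) \<mapsto> (u, 0, t, s)\<close> from \<open>I\<^sup>n \<times> I \<times> I\<close> to \<open>I\<^sup>n \<times> I \<times> I\<^sup>2\<close>.\<close>
definition connection_embedding :: "nat \<Rightarrow> nat \<Rightarrow> pt" where
  "connection_embedding n = (\<lambda>i. if 1 \<le> i \<and> i \<le> n then V i
      else if i = n + 2 then V (n + 2) else if i = n + 3 then V (n + 1) else Bot)"

definition kan_connection ::
    "(nat \<Rightarrow> bool \<Rightarrow> nat \<Rightarrow> (nat \<Rightarrow> (nat \<Rightarrow> pt) \<Rightarrow> 'a) \<Rightarrow> (nat \<Rightarrow> (nat \<Rightarrow> pt) \<Rightarrow> 'a))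
      \<Rightarrow> 'a cset \<Rightarrow> nat \<Rightarrow> 'a \<Rightarrow> 'a" where
  "kan_connection phi A n a = phi 2 True (n + 1) (connection_box A n a) (n + 2) (connection_embedding n)"

lemma connection_box_map_in_Bmaps:
  assumes g: "g \<in> Bmaps (n + 3) M"
  shows "connection_box_map n g \<in> Bmaps (n + 1) M"
proof -
  have "g (n + 2) \<in> pts M" "\<And>i. 1 \<le> i \<Longrightarrow> i \<le> n \<Longrightarrow> g i \<in> pts M"
    by (auto intro: Bmaps_in_pts[OF g])
  then show ?thesis
    unfolding connection_box_map_def Bmaps_def by (auto simp: pts_def)
qed

lemma boxS_connection_iff:
  "g \<in> boxS (n + 1) 2 True M \<longleftrightarrow>
     g \<in> Bmaps (n + 3) M \<and> (g (n + 2) = Bot \<or> g (n + 3) = Bot \<or> g (n + 3) = Top)"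
  by (simp add: boxS_2_True_iff numeral_3_eq_3)

lemma connection_box_pmap:
  assumes A: "cubical_set A" and a: "a \<in> cells A (n + 1)"
  shows "pmap A (n + 1 + 2) (boxS (n + 1) 2 True) (connection_box A n a)"
  unfolding pmap_def
proof (intro conjI allI impI)
  fix m f assume f: "f \<in> boxS (n + 1) 2 True m"
  then have "connection_box_map n f \<in> Bmaps (n + 1) m"
    using connection_box_map_in_Bmaps boxS_connection_iff by blast
  then show "connection_box A n a m f \<in> cells A m"
    using f cubical_set_act_in_cells[OF A _ a] unfolding connection_box_def by simp
next
  fix m m' f g assume f: "f \<in> boxS (n + 1) 2 True m" and g: "g \<in> Bmaps m m'"
  have G: "connection_box_map n f \<in> Bmaps (n + 1) m"
    using f connection_box_map_in_Bmaps boxS_connection_iff by blast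
  have "bcomp g f \<in> boxS (n + 1) 2 True m'"
    using f g bcomp_in_Bmaps unfolding boxS_connection_iff by (auto simp: bcomp_def)
  moreover have "connection_box_map n (bcomp g f) = bcomp g (connection_box_map n f)"
    using f unfolding boxS_connection_iff
    by (auto simp: bcomp_def connection_box_map_def fun_eq_iff)
  ultimately show "connection_box A n a m' (bcomp g f) = act A m m' g (connection_box A n a m f)"
    using f cubical_set_act_bcomp[OF A G g a] unfolding connection_box_def by simp
next
  fix m f assume "f \<notin> boxS (n + 1) 2 True m"
  then show "connection_box A n a m f = undefined"
    unfolding connection_box_def by simp
qed

lemma connection_embedding_in_Bmaps: "connection_embedding n \<in> Bmaps (n + 1 + 2) (n + 2)"
  unfolding connection_embedding_def Bmaps_def by (auto simp: pts_def)

lemma connection_embedding_bsum: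
  assumes f: "f \<in> Bmaps n m"
  shows "bcomp (connection_embedding m) (bsum (n + 1) (m + 1) (bsum n m f 1) 2)
       = bcomp (bsum n m f 2) (connection_embedding n)"
proof
  fix i
  show "bcomp (connection_embedding m) (bsum (n + 1) (m + 1) (bsum n m f 1) 2) i
      = bcomp (bsum n m f 2) (connection_embedding n) i"
  proof (cases "1 \<le> i \<and> i \<le> n")
    case True
    have "f i \<in> pts m" using Bmaps_in_pts[OF f] True by auto
    then have "ext (connection_embedding m) (f i) = f i"
      by (rule ext_eq_self) (simp add: connection_embedding_def)
    then show ?thesis
      using True by (simp add: bcomp_def bsum_def connection_embedding_def)
  qed (auto simp: bcomp_def bsum_def connection_embedding_def numeral_3_eq_3)
qed

lemma connection_box_map_bsum:
  assumes f: "f \<in> Bmaps n m"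
  shows "bcomp (connection_box_map m g) (bsum n m f 1)
       = connection_box_map n (bcomp g (bsum (n + 1) (m + 1) (bsum n m f 1) 2))"
proof
  fix i
  show "bcomp (connection_box_map m g) (bsum n m f 1) i
      = connection_box_map n (bcomp g (bsum (n + 1) (m + 1) (bsum n m f 1) 2)) i"
  proof (cases "1 \<le> i \<and> i \<le> n")
    case True
    have "f i \<in> pts m" using Bmaps_in_pts[OF f] True by auto
    then have "ext (connection_box_map m g) (f i) = ext g (f i)"
      by (rule pts_cases) (auto simp: connection_box_map_def)
    then show ?thesis
      using True by (simp add: bcomp_def bsum_def connection_box_map_def)
  qed (auto simp: bcomp_def bsum_def connection_box_map_def numeral_3_eq_3)
qed

text \<open>Reindexing the path along \<open>f\<close> reindexes its box along \<open>f \<oplus> id\<close>: this is what lets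
  uniformity of the filler yield naturality of the connection.\<close>
lemma connection_box_act:
  assumes A: "cubical_set A" and f: "f \<in> Bmaps n m" and a: "a \<in> cells A (n + 1)"
  shows "connection_box A m (act A (n + 1) (m + 1) (bsum n m f 1) a)
       = prec (boxS (m + 1) 2 True) (bsum (n + 1) (m + 1) (bsum n m f 1) 2) (connection_box A n a)"
    (is "connection_box A m (act A _ _ ?F a) = prec _ ?H _")
proof (intro ext)
  fix M g
  have F: "?F \<in> Bmaps (n + 1) (m + 1)" by (rule bsum_in_Bmaps[OF f])
  have H: "?H \<in> Bmaps (n + 3) (m + 3)"
    using bsum_in_Bmaps[OF F, of 2] by (simp add: numeral_3_eq_3)
  show "connection_box A m (act A (n + 1) (m + 1) ?F a) M g = prec (boxS (m + 1) 2 True) ?H (connection_box A n a) M g"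
  proof (cases "g \<in> boxS (m + 1) 2 True M")
    case True
    then have g: "g \<in> Bmaps (m + 3) M"
      using boxS_connection_iff by blast
    have "bcomp g ?H (n + 2) = g (m + 2)" "bcomp g ?H (n + 3) = g (m + 3)"
      by (auto simp: bcomp_def bsum_def numeral_3_eq_3)
    then have gH: "bcomp g ?H \<in> boxS (n + 1) 2 True M"
      using True bcomp_in_Bmaps[OF H g] unfolding boxS_connection_iff by simp
    have "connection_box A m (act A (n + 1) (m + 1) ?F a) M g
        = act A (m + 1) M (connection_box_map m g) (act A (n + 1) (m + 1) ?F a)"
      using True unfolding connection_box_def by simp
    also have "\<dots> = act A (n + 1) M (bcomp (connection_box_map m g) ?F) a"
      using cubical_set_act_bcomp[OF A F connection_box_map_in_Bmaps[OF g] a] by simp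
    also have "\<dots> = connection_box A n a M (bcomp g ?H)"
      using gH connection_box_map_bsum[OF f] unfolding connection_box_def by simp
    finally show ?thesis
      using True unfolding prec_def by simp
  qed (simp add: connection_box_def prec_def)
qed

context
  fixes A :: "'a cset" and phi
  assumes A: "cubical_set A" and kan: "uniform_kan A phi"
begin

lemma kan_connection_filler_pmap:
  "a \<in> cells A (n + 1) \<Longrightarrow>
     pmap A (n + 1 + 2) (fullS (n + 1 + 2)) (phi 2 True (n + 1) (connection_box A n a))"
  by (rule uniform_kan_filler_pmap[OF kan _ _ connection_box_pmap[OF A]]) auto

lemma kan_connection_in_cells: "a \<in> cells A (n + 1) \<Longrightarrow> kan_connection phi A n a \<in> cells A (n + 2)"
  unfolding kan_connection_def
  by (rule pmap_fullS_in_cells[OF kan_connection_filler_pmap connection_embedding_in_Bmaps])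

lemma kan_connection_act:
  assumes a: "a \<in> cells A (n + 1)" and e: "e \<in> Bmaps (n + 2) m"
  shows "act A (n + 2) m e (kan_connection phi A n a)
       = phi 2 True (n + 1) (connection_box A n a) m (bcomp e (connection_embedding n))"
  unfolding kan_connection_def
  using pmap_fullS_natural[OF kan_connection_filler_pmap[OF a] connection_embedding_in_Bmaps e]
  by simp

lemma kan_connection_natural:
  assumes f: "f \<in> Bmaps n m" and a: "a \<in> cells A (n + 1)"
  shows "kan_connection phi A m (act A (n + 1) (m + 1) (bsum n m f 1) a)
       = act A (n + 2) (m + 2) (bsum n m f 2) (kan_connection phi A n a)"
proof -
  let ?F = "bsum n m f 1" and ?H = "bsum (n + 1) (m + 1) (bsum n m f 1) 2"
  have "phi 2 True (m + 1) (connection_box A m (act A (n + 1) (m + 1) ?F a))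
      = prec (fullS (m + 1 + 2)) ?H (phi 2 True (n + 1) (connection_box A n a))"
    unfolding connection_box_act[OF A f a]
    by (rule uniform_kan_filler_uniform[OF kan _ _ connection_box_pmap[OF A a]])
      (use bsum_in_Bmaps[OF f, of 1] in simp_all)
  then have "kan_connection phi A m (act A (n + 1) (m + 1) ?F a)
      = phi 2 True (n + 1) (connection_box A n a) (m + 2) (bcomp (connection_embedding m) ?H)"
    using connection_embedding_in_Bmaps[of m] unfolding kan_connection_def prec_def fullS_def by simp
  also have "\<dots> = act A (n + 2) (m + 2) (bsum n m f 2) (kan_connection phi A n a)"
    unfolding connection_embedding_bsum[OF f]
    by (rule kan_connection_act[OF a bsum_in_Bmaps[OF f], symmetric])
  finally show ?thesis .
qed

lemma kan_connection_face:
  assumes a: "a \<in> cells A (n + 1)" and d: "d \<in> {Bot, Top}" and i: "i \<in> {n + 1, n + 2}"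
    and box: "bcomp (faceB (n + 2) i d) (connection_embedding n) \<in> boxS (n + 1) 2 True (n + 1)"
  shows "act A (n + 2) (n + 1) (faceB (n + 2) i d) (kan_connection phi A n a)
       = act A (n + 1) (n + 1) (connection_box_map n (bcomp (faceB (n + 2) i d) (connection_embedding n))) a"
proof -
  have "faceB (n + 2) i d \<in> Bmaps (n + 2) (n + 1)"
    using faceB_in_Bmaps[OF d, of i "n + 2"] i by auto
  then show ?thesis
    using kan_connection_act[OF a] box
      uniform_kan_filler_extends[OF kan _ _ connection_box_pmap[OF A a]]
    unfolding connection_box_def by simp
qed

lemma kan_connection_faces:
  assumes a: "a \<in> cells A (n + 1)"
  defines "const \<equiv> act A n (n + 1) (idB n) (act A (n + 1) n (faceB (n + 1) (n + 1) Bot) a)"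
  shows "act A (n + 2) (n + 1) (faceB (n + 2) (n + 1) Top) (kan_connection phi A n a) = a"
    and "act A (n + 2) (n + 1) (faceB (n + 2) (n + 1) Bot) (kan_connection phi A n a) = const"
    and "act A (n + 2) (n + 1) (faceB (n + 2) (n + 2) Bot) (kan_connection phi A n a) = const"
proof -
  have const: "const = act A (n + 1) (n + 1) (bcomp (idB n) (faceB (n + 1) (n + 1) Bot)) a"
    unfolding const_def
    using cubical_set_act_bcomp[OF A faceB_in_Bmaps[of Bot "n + 1" "n + 1"] idB_in_Bmaps a]
    by simp
  have box: "bcomp (faceB (n + 2) i d) (connection_embedding n) \<in> boxS (n + 1) 2 True (n + 1)"
    if "(i, d) \<in> {(n + 1, Top), (n + 1, Bot), (n + 2, Bot)}" for i d
    using that unfolding boxS_connection_iff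
    by (auto simp: Bmaps_def pts_def bcomp_def faceB_def connection_embedding_def numeral_3_eq_3)
  have "connection_box_map n (bcomp (faceB (n + 2) (n + 1) Top) (connection_embedding n)) = idB (n + 1)"
    "connection_box_map n (bcomp (faceB (n + 2) (n + 1) Bot) (connection_embedding n))
       = bcomp (idB n) (faceB (n + 1) (n + 1) Bot)"
    "connection_box_map n (bcomp (faceB (n + 2) (n + 2) Bot) (connection_embedding n))
       = bcomp (idB n) (faceB (n + 1) (n + 1) Bot)"
    by (auto simp: fun_eq_iff bcomp_def faceB_def connection_embedding_def connection_box_map_def
        idB_def numeral_3_eq_3)
  then show "act A (n + 2) (n + 1) (faceB (n + 2) (n + 1) Top) (kan_connection phi A n a) = a"
    and "act A (n + 2) (n + 1) (faceB (n + 2) (n + 1) Bot) (kan_connection phi A n a) = const"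
    and "act A (n + 2) (n + 1) (faceB (n + 2) (n + 2) Bot) (kan_connection phi A n a) = const"
    using kan_connection_face[OF a _ _ box] cubical_set_act_idB[OF A a] const by simp_all
qed

lemma kan_connection_is_connection: "is_connection A (kan_connection phi A)"
  unfolding is_connection_def Let_def
  using kan_connection_in_cells kan_connection_natural kan_connection_faces by blast

end

theorem lemma3p8:
  fixes A :: "'a cset"
    and phi :: "nat \<Rightarrow> bool \<Rightarrow> nat \<Rightarrow> (nat \<Rightarrow> (nat \<Rightarrow> pt) \<Rightarrow> 'a) \<Rightarrow> (nat \<Rightarrow> (nat \<Rightarrow> pt) \<Rightarrow> 'a)"
  assumes "cubical_set A"
    and "uniform_kan A phi"
  shows "\<exists>c. is_connection A c"
  using kan_connection_is_connection[OF assms] by blast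

end
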